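(* Let $(X,d_X)$ be a discrete countable metric space and $A\subset X$ nonempty such that $X\setminus N_k(A)\neq\emptyset$ for every $k\in\mathbb N$. Then $M_{X,d^A}$ is a submodule of the Hilbert $C^*_u(X)$-module $C^*_u(X)$ (with inner product $\langle S,T\rangle=S^*T$) which is not orthogonally complemented; more precisely, $M_{X,d^A}\ne C^*_u(X)$ while its orthogonal complement in $C^*_u(X)$ is $\{0\}$.
   Context: $H_X=\ell^2(X)$, $C^*_u(X)$ is the norm closure in $\mathbb B(H_X)$ of bounded finite-propagation operators (propagation at most $L$ means $(\delta_x,T\delta_y)=0$ whenever $d_X(x,y)\ge L$). $N_k(A)=\{x\in X:d_X(x,A)\le k\}$. With $X_0,X_1$ two copies of $X$ ($x\in X$ denoted $x_i$ in $X_i$), $d^A$ is the metric on $X_0\sqcup X_1$ given by $d^A(x_i,y_i)=d_X(x,y)$, $i=0,1$, and $d^A(x_0,y_1)=\inf_{z\in A}[d_X(x,z)+d_X(y,z)+1]$. $M_{X,d^A}$ is the norm closure of the bounded operators $T:H_{X_0}\to H_{X_1}$ of finite propagation with respect to $d^A$ (there is $L$ with $(\delta_{y_1},T\delta_{x_0})=0$ whenever $d^A(x_0,y_1)\ge L$), regarded as a subset of $\mathbb B(H_X)$ via the identification $H_{X_0}=H_{X_1}=H_X$. *)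

theory Defs
  imports "HOL-Analysis.Analysis"
begin

text \<open>Vectors of H_X = l^2(X), for X a subset of the type 'a: functions vanishing off X,
  square summable.  Operators are maps on such functions, normalised to vanish off l^2(X).\<close>

definition ell2 :: "'a set \<Rightarrow> ('a \<Rightarrow> complex) set" where
  "ell2 X = {f. (\<forall>x. x \<notin> X \<longrightarrow> f x = 0) \<and> (\<lambda>x. (cmod (f x))\<^sup>2) summable_on X}"

definition ell2_norm :: "('a \<Rightarrow> complex) \<Rightarrow> real" where
  "ell2_norm f = sqrt (\<Sum>\<^sub>\<infinity>x. (cmod (f x))\<^sup>2)"

definition ell2_inner :: "('a \<Rightarrow> complex) \<Rightarrow> ('a \<Rightarrow> complex) \<Rightarrow> complex" where
  "ell2_inner f g = (\<Sum>\<^sub>\<infinity>x. cnj (f x) * g x)"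

definition delta :: "'a \<Rightarrow> 'a \<Rightarrow> complex" where
  "delta y = (\<lambda>z. if z = y then 1 else 0)"

type_synonym 'a op = "('a \<Rightarrow> complex) \<Rightarrow> ('a \<Rightarrow> complex)"

definition bounded_op :: "'a set \<Rightarrow> 'a op \<Rightarrow> bool" where
  "bounded_op X T \<longleftrightarrow>
     (\<forall>f. f \<notin> ell2 X \<longrightarrow> T f = (\<lambda>x. 0)) \<and>
     (\<forall>f \<in> ell2 X. T f \<in> ell2 X) \<and>
     (\<forall>f \<in> ell2 X. \<forall>g \<in> ell2 X. T (\<lambda>x. f x + g x) = (\<lambda>x. T f x + T g x)) \<and>
     (\<forall>c. \<forall>f \<in> ell2 X. T (\<lambda>x. c * f x) = (\<lambda>x. c * T f x)) \<and>
     (\<exists>C. \<forall>f \<in> ell2 X. ell2_norm (T f) \<le> C * ell2_norm f)"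

definition zero_op :: "'a op" where
  "zero_op = (\<lambda>f x. 0)"

definition op_close :: "'a set \<Rightarrow> 'a op \<Rightarrow> 'a op \<Rightarrow> real \<Rightarrow> bool" where
  "op_close X T S e \<longleftrightarrow> (\<forall>f \<in> ell2 X. ell2_norm (\<lambda>x. T f x - S f x) \<le> e * ell2_norm f)"

definition op_closure :: "'a set \<Rightarrow> 'a op set \<Rightarrow> 'a op set" where
  "op_closure X S = {T. bounded_op X T \<and> (\<forall>e>0. \<exists>S'\<in>S. op_close X T S' e)}"

definition adjoint :: "'a set \<Rightarrow> 'a op \<Rightarrow> 'a op" where
  "adjoint X T = (THE S. bounded_op X S \<and>
      (\<forall>f \<in> ell2 X. \<forall>g \<in> ell2 X. ell2_inner (T f) g = ell2_inner f (S g)))"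

definition finite_prop :: "'a set \<Rightarrow> ('a \<Rightarrow> 'a \<Rightarrow> real) \<Rightarrow> 'a op \<Rightarrow> bool" where
  "finite_prop X D T \<longleftrightarrow> (\<exists>L. \<forall>x\<in>X. \<forall>y\<in>X. D y x \<ge> L \<longrightarrow> T (delta y) x = 0)"

definition uniform_roe :: "'a set \<Rightarrow> ('a \<Rightarrow> 'a \<Rightarrow> real) \<Rightarrow> 'a op set" where
  "uniform_roe X d = op_closure X {T. bounded_op X T \<and> finite_prop X d T}"

definition dA :: "('a \<Rightarrow> 'a \<Rightarrow> real) \<Rightarrow> 'a set \<Rightarrow> 'a \<Rightarrow> 'a \<Rightarrow> real" where
  "dA d A x y = Inf ((\<lambda>z. d x z + d y z + 1) ` A)"

text \<open>M_{X,d^A}: operators H_{X_0} \<rightarrow> H_{X_1} (identified with operators on H_X)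
  of finite propagation w.r.t. d^A, i.e. (delta_{y_1}, T delta_{x_0}) = 0 when d^A(x_0,y_1) >= L.\<close>
definition M_space :: "'a set \<Rightarrow> ('a \<Rightarrow> 'a \<Rightarrow> real) \<Rightarrow> 'a set \<Rightarrow> 'a op set" where
  "M_space X d A = op_closure X {T. bounded_op X T \<and> finite_prop X (dA d A) T}"

definition setdist :: "('a \<Rightarrow> 'a \<Rightarrow> real) \<Rightarrow> 'a \<Rightarrow> 'a set \<Rightarrow> real" where
  "setdist d x A = Inf (d x ` A)"

definition nbhd :: "'a set \<Rightarrow> ('a \<Rightarrow> 'a \<Rightarrow> real) \<Rightarrow> real \<Rightarrow> 'a set \<Rightarrow> 'a set" where
  "nbhd X d k A = {x \<in> X. setdist d x A \<le> k}"

definition discrete_metric :: "'a set \<Rightarrow> ('a \<Rightarrow> 'a \<Rightarrow> real) \<Rightarrow> bool" where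
  "discrete_metric X d \<longleftrightarrow> (\<forall>x\<in>X. \<exists>e>0. \<forall>y\<in>X. d x y < e \<longrightarrow> y = x)"

end

theory Submission
  imports Defs
begin

text \<open>
  Every operator of finite d^A-propagation has finite d-propagation, because
  d(y,x) + 1 \<le> d^A(y,x), and composing it on the right with an operator of finite
  d-propagation keeps the d^A-propagation finite, because d^A(y,x) \<le> d(y,w) + d^A(w,x);
  passing to norm closures gives the module structure.
  The identity is not in M: far away from A the diagonal value d^A(y,y) \<ge> d(y,A) is
  arbitrarily large, so every operator of finite d^A-propagation has a vanishing diagonal
  coefficient at some point and is at distance at least 1 from the identity.
  On the other hand d^A is finite on all pairs, so M contains the rank-one projections onto
  the basis vectors delta y; if S* annihilates all of them, then S* (delta y) = 0 for every y,
  hence S = 0.  The adjoint S* is constructed from the matrix coefficients (S (delta y), g).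
\<close>

section \<open>Square-summable functions\<close>

definition ell2_sqnorm :: "('a \<Rightarrow> complex) \<Rightarrow> real" where
  "ell2_sqnorm f = (\<Sum>\<^sub>\<infinity>x. (cmod (f x))\<^sup>2)"

lemma ell2_norm_eq_sqrt: "ell2_norm f = sqrt (ell2_sqnorm f)"
  by (simp add: ell2_norm_def ell2_sqnorm_def)

lemma mem_ell2_iff:
  "f \<in> ell2 X \<longleftrightarrow> (\<forall>x. x \<notin> X \<longrightarrow> f x = 0) \<and> (\<lambda>x. (cmod (f x))\<^sup>2) summable_on UNIV"
proof -
  have "(\<forall>x. x \<notin> X \<longrightarrow> f x = 0) \<Longrightarrow>
     ((\<lambda>x. (cmod (f x))\<^sup>2) summable_on X \<longleftrightarrow> (\<lambda>x. (cmod (f x))\<^sup>2) summable_on UNIV)"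
    by (rule summable_on_cong_neutral) auto
  thus ?thesis unfolding ell2_def by auto
qed

lemma ell2_summable: "f \<in> ell2 X \<Longrightarrow> (\<lambda>x. (cmod (f x))\<^sup>2) summable_on UNIV"
  by (simp add: mem_ell2_iff)

lemma ell2_vanishes: "f \<in> ell2 X \<Longrightarrow> x \<notin> X \<Longrightarrow> f x = 0"
  by (simp add: mem_ell2_iff)

lemma ell2_sqnorm_nonneg: "0 \<le> ell2_sqnorm f"
  unfolding ell2_sqnorm_def by (rule infsum_nonneg) simp

lemma ell2_norm_nonneg: "0 \<le> ell2_norm f"
  by (simp add: ell2_norm_eq_sqrt ell2_sqnorm_nonneg)

lemma sum_le_ell2_sqnorm:
  "f \<in> ell2 X \<Longrightarrow> finite F \<Longrightarrow> (\<Sum>x\<in>F. (cmod (f x))\<^sup>2) \<le> ell2_sqnorm f"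
  unfolding ell2_sqnorm_def by (rule finite_sum_le_infsum) (auto intro: ell2_summable)

lemma ell2_sqnorm_finite_support:
  assumes "finite F" and "\<And>x. x \<notin> F \<Longrightarrow> f x = 0"
  shows "ell2_sqnorm f = (\<Sum>x\<in>F. (cmod (f x))\<^sup>2)"
proof -
  have "ell2_sqnorm f = (\<Sum>\<^sub>\<infinity>x\<in>F. (cmod (f x))\<^sup>2)"
    unfolding ell2_sqnorm_def by (rule infsum_cong_neutral) (auto simp: assms(2))
  thus ?thesis using assms(1) by simp
qed

lemma finite_support_in_ell2:
  assumes "finite F" "F \<subseteq> X" and "\<And>x. x \<notin> F \<Longrightarrow> f x = 0"
  shows "f \<in> ell2 X"
proof -
  have "finite {x \<in> UNIV. (cmod (f x))\<^sup>2 \<noteq> 0}"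
    by (rule rev_finite_subset[OF assms(1)]) (use assms(3) in auto)
  thus ?thesis using assms unfolding mem_ell2_iff
    by (auto intro!: finite_nonzero_values_imp_summable_on)
qed

lemma delta_in_ell2: "y \<in> X \<Longrightarrow> delta y \<in> ell2 X"
  by (rule finite_support_in_ell2[of "{y}"]) (auto simp: delta_def)

lemma ell2_norm_delta: "ell2_norm (delta y) = 1"
  by (subst ell2_norm_eq_sqrt, subst ell2_sqnorm_finite_support[of "{y}"]) (auto simp: delta_def)

lemma zero_in_ell2: "(\<lambda>x. 0) \<in> ell2 X"
  by (rule finite_support_in_ell2[of "{}"]) auto

lemma ell2_norm_zero: "ell2_norm (\<lambda>x. 0) = 0"
  by (simp add: ell2_norm_eq_sqrt ell2_sqnorm_def)

lemma scale_in_ell2: "f \<in> ell2 X \<Longrightarrow> (\<lambda>x. c * f x) \<in> ell2 X"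
  unfolding mem_ell2_iff
  by (auto simp: norm_mult power_mult_distrib intro: summable_on_cmult_right)

lemma ell2_norm_scale: "ell2_norm (\<lambda>x. c * f x) = cmod c * ell2_norm f"
  by (simp add: ell2_norm_eq_sqrt ell2_sqnorm_def norm_mult power_mult_distrib
      infsum_cmult_right' real_sqrt_mult)

lemma norm_le_ell2_norm: "f \<in> ell2 X \<Longrightarrow> cmod (f x) \<le> ell2_norm f"
  using sum_le_ell2_sqnorm[of f X "{x}"] real_le_rsqrt by (simp add: ell2_norm_eq_sqrt)

lemma L2_set_le_ell2_norm: "f \<in> ell2 X \<Longrightarrow> L2_set (\<lambda>x. cmod (f x)) F \<le> ell2_norm f"
  by (cases "finite F")
    (simp_all add: L2_set_def ell2_norm_eq_sqrt sum_le_ell2_sqnorm ell2_sqnorm_nonneg)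

lemma add_in_ell2:
  assumes f: "f \<in> ell2 X" and g: "g \<in> ell2 X"
  shows "(\<lambda>x. f x + g x) \<in> ell2 X"
proof -
  have summable: "(\<lambda>x. 2 * (cmod (f x))\<^sup>2 + 2 * (cmod (g x))\<^sup>2) summable_on UNIV"
    using f g by (intro summable_on_add summable_on_cmult_right ell2_summable)
  have "(cmod (f x + g x))\<^sup>2 \<le> 2 * (cmod (f x))\<^sup>2 + 2 * (cmod (g x))\<^sup>2" for x
  proof -
    have "(cmod (f x + g x))\<^sup>2 \<le> (cmod (f x) + cmod (g x))\<^sup>2"
      by (intro power_mono norm_triangle_ineq) simp
    also have "\<dots> \<le> 2 * (cmod (f x))\<^sup>2 + 2 * (cmod (g x))\<^sup>2"
      using sum_squares_bound[of "cmod (f x)" "cmod (g x)"] by (simp add: power2_sum)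
    finally show ?thesis .
  qed
  thus ?thesis unfolding mem_ell2_iff
    using ell2_vanishes[OF f] ell2_vanishes[OF g]
    by (auto intro!: summable_on_comparison_test[OF summable])
qed

lemma diff_in_ell2: "f \<in> ell2 X \<Longrightarrow> g \<in> ell2 X \<Longrightarrow> (\<lambda>x. f x - g x) \<in> ell2 X"
  using add_in_ell2[OF _ scale_in_ell2[of g X "-1"], of f] by simp

lemma sum_in_ell2:
  "finite F \<Longrightarrow> (\<And>y. y \<in> F \<Longrightarrow> h y \<in> ell2 X) \<Longrightarrow> (\<lambda>x. \<Sum>y\<in>F. c y * h y x) \<in> ell2 X"
proof (induction F rule: finite_induct)
  case empty
  thus ?case by (simp add: zero_in_ell2)
next
  case (insert a F)
  have "(\<lambda>x. c a * h a x + (\<Sum>y\<in>F. c y * h y x)) \<in> ell2 X"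
    using insert by (intro add_in_ell2 scale_in_ell2) auto
  thus ?case using insert by simp
qed

lemma ell2_norm_triangle:
  assumes f: "f \<in> ell2 X" and g: "g \<in> ell2 X"
  shows "ell2_norm (\<lambda>x. f x + g x) \<le> ell2_norm f + ell2_norm g"
proof -
  have "ell2_sqnorm (\<lambda>x. f x + g x) \<le> (ell2_norm f + ell2_norm g)\<^sup>2"
    unfolding ell2_sqnorm_def
  proof (rule infsum_le_finite_sums[OF ell2_summable[OF add_in_ell2[OF f g]]])
    fix F :: "'a set" assume "finite F"
    have "(\<Sum>x\<in>F. (cmod (f x + g x))\<^sup>2) = (L2_set (\<lambda>x. cmod (f x + g x)) F)\<^sup>2"
      unfolding L2_set_def by (simp add: sum_nonneg)
    also have "\<dots> \<le> (L2_set (\<lambda>x. cmod (f x)) F + L2_set (\<lambda>x. cmod (g x)) F)\<^sup>2"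
    proof (rule power_mono)
      have "L2_set (\<lambda>x. cmod (f x + g x)) F \<le> L2_set (\<lambda>x. cmod (f x) + cmod (g x)) F"
        by (rule L2_set_mono) (auto simp: norm_triangle_ineq)
      also have "\<dots> \<le> L2_set (\<lambda>x. cmod (f x)) F + L2_set (\<lambda>x. cmod (g x)) F"
        by (rule L2_set_triangle_ineq)
      finally show "L2_set (\<lambda>x. cmod (f x + g x)) F \<le> \<dots>" .
    qed simp
    also have "\<dots> \<le> (ell2_norm f + ell2_norm g)\<^sup>2"
      by (intro power_mono add_mono L2_set_le_ell2_norm[OF f] L2_set_le_ell2_norm[OF g]) simp
    finally show "(\<Sum>x\<in>F. (cmod (f x + g x))\<^sup>2) \<le> (ell2_norm f + ell2_norm g)\<^sup>2" .
  qed
  hence "sqrt (ell2_sqnorm (\<lambda>x. f x + g x)) \<le> sqrt ((ell2_norm f + ell2_norm g)\<^sup>2)"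
    by (rule real_sqrt_le_mono)
  thus ?thesis by (simp add: ell2_norm_eq_sqrt ell2_sqnorm_nonneg)
qed

lemma ell2_norm_triangle_diff:
  "f \<in> ell2 X \<Longrightarrow> g \<in> ell2 X \<Longrightarrow> h \<in> ell2 X \<Longrightarrow>
   ell2_norm (\<lambda>x. f x - h x) \<le> ell2_norm (\<lambda>x. f x - g x) + ell2_norm (\<lambda>x. g x - h x)"
  using ell2_norm_triangle[OF diff_in_ell2[of f X g] diff_in_ell2[of g X h]] by simp

lemma ell2_finite_truncation:
  assumes f: "f \<in> ell2 X" and e: "e > 0"
  obtains F where "finite F" "F \<subseteq> X"
    "ell2_norm (\<lambda>x. f x - (if x \<in> F then f x else 0)) \<le> e"
proof -
  let ?q = "\<lambda>x. (cmod (f x))\<^sup>2"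
  have "?q summable_on X" using f unfolding ell2_def by auto
  then obtain F where F: "finite F" "F \<subseteq> X" "dist (sum ?q F) (infsum ?q X) \<le> e\<^sup>2"
    using infsum_finite_approximation[of ?q X "e\<^sup>2"] e by auto
  have infsum_eq: "infsum ?q X = ell2_sqnorm f" unfolding ell2_sqnorm_def
    by (rule infsum_cong_neutral) (use ell2_vanishes[OF f] in auto)
  define r where "r = (\<lambda>x. if x \<in> F then f x else 0)"
  define t where "t = (\<lambda>x. f x - r x)"
  have r: "r \<in> ell2 X" by (rule finite_support_in_ell2[OF F(1,2)]) (auto simp: r_def)
  have t: "t \<in> ell2 X" using diff_in_ell2[OF f r] by (simp add: t_def)
  have "(\<lambda>x. (cmod (f x))\<^sup>2) = (\<lambda>x. (cmod (t x))\<^sup>2 + (cmod (r x))\<^sup>2)"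
    by (auto simp: t_def r_def)
  hence "ell2_sqnorm f = ell2_sqnorm t + ell2_sqnorm r"
    unfolding ell2_sqnorm_def using infsum_add[OF ell2_summable[OF t] ell2_summable[OF r]]
    by simp
  moreover have "ell2_sqnorm r = sum ?q F"
    by (subst ell2_sqnorm_finite_support[OF F(1)]) (auto simp: r_def)
  ultimately have "ell2_sqnorm t \<le> e\<^sup>2" using F(3) infsum_eq by (simp add: dist_real_def)
  hence "ell2_norm t \<le> e"
    using e real_sqrt_le_mono[of "ell2_sqnorm t" "e\<^sup>2"] by (simp add: ell2_norm_eq_sqrt)
  thus ?thesis using F that by (simp add: t_def r_def)
qed

lemma ell2_functional_eq_0_by_truncation:
  assumes f: "f \<in> ell2 X"
    and add: "\<And>g h. g \<in> ell2 X \<Longrightarrow> h \<in> ell2 X \<Longrightarrow> \<phi> (\<lambda>x. g x + h x) = \<phi> g + \<phi> h"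
    and bound: "\<And>h. h \<in> ell2 X \<Longrightarrow> cmod (\<phi> h) \<le> K * ell2_norm h"
    and trunc: "\<And>F. finite F \<Longrightarrow> F \<subseteq> X \<Longrightarrow> \<phi> (\<lambda>x. if x \<in> F then f x else 0) = 0"
  shows "\<phi> f = 0"
proof -
  define K' where "K' = max K 0"
  have K': "K' \<ge> 0" "\<And>h. h \<in> ell2 X \<Longrightarrow> cmod (\<phi> h) \<le> K' * ell2_norm h"
    using bound order_trans[OF bound mult_right_mono[OF _ ell2_norm_nonneg]]
    by (auto simp: K'_def)
  have small: "cmod (\<phi> f) \<le> K' * e" if "e > 0" for e
  proof -
    obtain F where F: "finite F" "F \<subseteq> X"
      and close: "ell2_norm (\<lambda>x. f x - (if x \<in> F then f x else 0)) \<le> e"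
      using ell2_finite_truncation[OF f \<open>e > 0\<close>] by blast
    define r where "r = (\<lambda>x. if x \<in> F then f x else 0)"
    define t where "t = (\<lambda>x. f x - r x)"
    have r: "r \<in> ell2 X" by (rule finite_support_in_ell2[OF F]) (auto simp: r_def)
    have t: "t \<in> ell2 X" using diff_in_ell2[OF f r] by (simp add: t_def)
    have "f = (\<lambda>x. t x + r x)" by (auto simp: t_def)
    hence "\<phi> f = \<phi> t" using add[OF t r] trunc[OF F] by (simp add: r_def)
    also have "cmod (\<phi> t) \<le> K' * ell2_norm t" by (rule K'(2)[OF t])
    also have "\<dots> \<le> K' * e" using close K' by (intro mult_left_mono) (auto simp: t_def r_def)
    finally show ?thesis .
  qed
  have "cmod (\<phi> f) \<le> 0"
  proof (rule field_le_epsilon)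
    fix e :: real assume e: "0 < e"
    have "cmod (\<phi> f) \<le> K' * (e / (K' + 1))" using small[of "e / (K' + 1)"] e K' by simp
    also have "\<dots> \<le> e" using K' e by (simp add: field_simps)
    finally show "cmod (\<phi> f) \<le> 0 + e" by simp
  qed
  thus ?thesis by simp
qed

lemma ell2_inner_abs_summable:
  assumes f: "f \<in> ell2 X" and g: "g \<in> ell2 X"
  shows "(\<lambda>x. norm (cnj (f x) * g x)) summable_on UNIV"
proof -
  have summable: "(\<lambda>x. (cmod (f x))\<^sup>2 + (cmod (g x))\<^sup>2) summable_on UNIV"
    using f g by (intro summable_on_add ell2_summable)
  have "cmod (cnj (f x) * g x) \<le> (cmod (f x))\<^sup>2 + (cmod (g x))\<^sup>2" for x
  proof -
    have "cmod (cnj (f x) * g x) = cmod (f x) * cmod (g x)" by (simp add: norm_mult)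
    moreover have "0 \<le> cmod (f x) * cmod (g x)" by simp
    ultimately show ?thesis using sum_squares_bound[of "cmod (f x)" "cmod (g x)"] by linarith
  qed
  thus ?thesis by (intro summable_on_comparison_test[OF summable]) auto
qed

lemma ell2_inner_summable:
  "f \<in> ell2 X \<Longrightarrow> g \<in> ell2 X \<Longrightarrow> (\<lambda>x. cnj (f x) * g x) summable_on UNIV"
  by (rule abs_summable_summable[OF ell2_inner_abs_summable])

lemma ell2_Cauchy_Schwarz:
  assumes f: "f \<in> ell2 X" and g: "g \<in> ell2 X"
  shows "cmod (ell2_inner f g) \<le> ell2_norm f * ell2_norm g"
proof -
  have "cmod (ell2_inner f g) \<le> (\<Sum>\<^sub>\<infinity>x. cmod (cnj (f x) * g x))"
    unfolding ell2_inner_def by (rule norm_infsum_bound[OF ell2_inner_abs_summable[OF f g]])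
  also have "\<dots> \<le> ell2_norm f * ell2_norm g"
  proof (rule infsum_le_finite_sums[OF ell2_inner_abs_summable[OF f g]])
    fix F :: "'a set" assume "finite F"
    have "(\<Sum>x\<in>F. cmod (cnj (f x) * g x)) = (\<Sum>x\<in>F. \<bar>cmod (f x)\<bar> * \<bar>cmod (g x)\<bar>)"
      by (simp add: norm_mult)
    also have "\<dots> \<le> L2_set (\<lambda>x. cmod (f x)) F * L2_set (\<lambda>x. cmod (g x)) F"
      by (rule L2_set_mult_ineq)
    also have "\<dots> \<le> ell2_norm f * ell2_norm g"
      by (intro mult_mono L2_set_le_ell2_norm[OF f] L2_set_le_ell2_norm[OF g])
        (auto simp: ell2_norm_nonneg)
    finally show "(\<Sum>x\<in>F. cmod (cnj (f x) * g x)) \<le> ell2_norm f * ell2_norm g" .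
  qed
  finally show ?thesis .
qed

lemma ell2_inner_add_left:
  assumes "f \<in> ell2 X" "h \<in> ell2 X" "g \<in> ell2 X"
  shows "ell2_inner (\<lambda>x. f x + h x) g = ell2_inner f g + ell2_inner h g"
  using infsum_add[OF ell2_inner_summable[OF assms(1,3)] ell2_inner_summable[OF assms(2,3)]]
  by (simp add: ell2_inner_def distrib_right)

lemma ell2_inner_add_right:
  assumes "f \<in> ell2 X" "h \<in> ell2 X" "g \<in> ell2 X"
  shows "ell2_inner g (\<lambda>x. f x + h x) = ell2_inner g f + ell2_inner g h"
  using infsum_add[OF ell2_inner_summable[OF assms(3,1)] ell2_inner_summable[OF assms(3,2)]]
  by (simp add: ell2_inner_def distrib_left)

lemma ell2_inner_scale_left: "ell2_inner (\<lambda>x. c * f x) g = cnj c * ell2_inner f g"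
  unfolding ell2_inner_def by (simp add: mult.assoc infsum_cmult_right')

lemma ell2_inner_scale_right: "ell2_inner g (\<lambda>x. c * f x) = c * ell2_inner g f"
  unfolding ell2_inner_def by (simp add: mult.left_commute infsum_cmult_right')

lemma ell2_inner_zero_right: "ell2_inner f (\<lambda>x. 0) = 0"
  by (simp add: ell2_inner_def)

lemma ell2_inner_finite_support_left:
  assumes "finite F" and "\<And>x. x \<notin> F \<Longrightarrow> f x = 0"
  shows "ell2_inner f g = (\<Sum>x\<in>F. cnj (f x) * g x)"
proof -
  have "ell2_inner f g = (\<Sum>\<^sub>\<infinity>x\<in>F. cnj (f x) * g x)"
    unfolding ell2_inner_def by (rule infsum_cong_neutral) (auto simp: assms(2))
  thus ?thesis using assms(1) by simp
qed

lemma ell2_inner_delta_left: "ell2_inner (delta y) g = g y"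
  by (subst ell2_inner_finite_support_left[of "{y}"]) (auto simp: delta_def)

lemma ell2_inner_delta_right: "ell2_inner g (delta y) = cnj (g y)"
proof -
  have "ell2_inner g (delta y) = (\<Sum>\<^sub>\<infinity>x\<in>{y}. cnj (g x) * delta y x)"
    unfolding ell2_inner_def by (rule infsum_cong_neutral) (auto simp: delta_def)
  thus ?thesis by (simp add: delta_def)
qed

lemma ell2_inner_sum_left:
  "finite F \<Longrightarrow> (\<And>y. y \<in> F \<Longrightarrow> h y \<in> ell2 X) \<Longrightarrow> g \<in> ell2 X \<Longrightarrow>
   ell2_inner (\<lambda>x. \<Sum>y\<in>F. c y * h y x) g = (\<Sum>y\<in>F. cnj (c y) * ell2_inner (h y) g)"
proof (induction F rule: finite_induct)
  case empty
  thus ?case by (simp add: ell2_inner_def)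
next
  case (insert a F)
  have "(\<lambda>x. \<Sum>y\<in>F. c y * h y x) \<in> ell2 X" using insert by (intro sum_in_ell2) auto
  hence "ell2_inner (\<lambda>x. c a * h a x + (\<Sum>y\<in>F. c y * h y x)) g =
      ell2_inner (\<lambda>x. c a * h a x) g + ell2_inner (\<lambda>x. \<Sum>y\<in>F. c y * h y x) g"
    using insert by (intro ell2_inner_add_left scale_in_ell2) auto
  thus ?case using insert by (simp add: ell2_inner_scale_left)
qed

lemma truncation_eq_sum_delta:
  "finite F \<Longrightarrow> (\<lambda>x. if x \<in> F then f x else 0) = (\<lambda>x. \<Sum>y\<in>F. f y * delta y x)"
  by (auto simp: delta_def if_distrib cong: if_cong)

section \<open>Bounded operators\<close>

lemma bounded_opI:
  assumes "\<And>f. f \<notin> ell2 X \<Longrightarrow> T f = (\<lambda>x. 0)"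
    and "\<And>f. f \<in> ell2 X \<Longrightarrow> T f \<in> ell2 X"
    and "\<And>f g. f \<in> ell2 X \<Longrightarrow> g \<in> ell2 X \<Longrightarrow> T (\<lambda>x. f x + g x) = (\<lambda>x. T f x + T g x)"
    and "\<And>c f. f \<in> ell2 X \<Longrightarrow> T (\<lambda>x. c * f x) = (\<lambda>x. c * T f x)"
    and "\<And>f. f \<in> ell2 X \<Longrightarrow> ell2_norm (T f) \<le> C * ell2_norm f"
  shows "bounded_op X T"
  using assms unfolding bounded_op_def by blast

context
  fixes X :: "'a set" and T :: "'a op"
  assumes T: "bounded_op X T"
begin

lemma bounded_op_outside: "f \<notin> ell2 X \<Longrightarrow> T f = (\<lambda>x. 0)"
  using T unfolding bounded_op_def by blast

lemma bounded_op_in_ell2: "f \<in> ell2 X \<Longrightarrow> T f \<in> ell2 X"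
  using T unfolding bounded_op_def by blast

lemma bounded_op_add:
  "f \<in> ell2 X \<Longrightarrow> g \<in> ell2 X \<Longrightarrow> T (\<lambda>x. f x + g x) = (\<lambda>x. T f x + T g x)"
  using T unfolding bounded_op_def by blast

lemma bounded_op_scale: "f \<in> ell2 X \<Longrightarrow> T (\<lambda>x. c * f x) = (\<lambda>x. c * T f x)"
  using T unfolding bounded_op_def by blast

lemma bounded_op_bound:
  obtains C where "C \<ge> 0" "\<And>f. f \<in> ell2 X \<Longrightarrow> ell2_norm (T f) \<le> C * ell2_norm f"
proof -
  obtain C where C: "\<forall>f\<in>ell2 X. ell2_norm (T f) \<le> C * ell2_norm f"
    using T unfolding bounded_op_def by blast
  have "ell2_norm (T f) \<le> max C 0 * ell2_norm f" if "f \<in> ell2 X" for f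
    using C that order_trans[OF _ mult_right_mono[OF _ ell2_norm_nonneg]] by force
  thus ?thesis using that[of "max C 0"] by simp
qed

lemma bounded_op_zero: "T (\<lambda>x. 0) = (\<lambda>x. 0)"
  using bounded_op_scale[OF zero_in_ell2, of 0] by simp

lemma bounded_op_diff:
  assumes f: "f \<in> ell2 X" and g: "g \<in> ell2 X"
  shows "T (\<lambda>x. f x - g x) = (\<lambda>x. T f x - T g x)"
  using bounded_op_add[OF f scale_in_ell2[OF g, of "-1"]] bounded_op_scale[OF g, of "-1"] by simp

lemma bounded_op_sum:
  "finite F \<Longrightarrow> (\<And>y. y \<in> F \<Longrightarrow> h y \<in> ell2 X) \<Longrightarrow>
   T (\<lambda>x. \<Sum>y\<in>F. c y * h y x) = (\<lambda>x. \<Sum>y\<in>F. c y * T (h y) x)"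
proof (induction F rule: finite_induct)
  case empty
  thus ?case by (simp add: bounded_op_zero)
next
  case (insert a F)
  have "(\<lambda>x. \<Sum>y\<in>F. c y * h y x) \<in> ell2 X" using insert by (intro sum_in_ell2) auto
  hence "T (\<lambda>x. c a * h a x + (\<Sum>y\<in>F. c y * h y x)) =
      (\<lambda>x. T (\<lambda>x. c a * h a x) x + T (\<lambda>x. \<Sum>y\<in>F. c y * h y x) x)"
    using insert by (intro bounded_op_add scale_in_ell2) auto
  thus ?case using insert by (simp add: bounded_op_scale)
qed

lemma bounded_op_truncation:
  "finite F \<Longrightarrow> F \<subseteq> X \<Longrightarrow>
   T (\<lambda>x. if x \<in> F then f x else 0) = (\<lambda>x. \<Sum>y\<in>F. f y * T (delta y) x)"
  by (auto simp: truncation_eq_sum_delta intro!: bounded_op_sum delta_in_ell2)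

lemma bounded_op_apply_eq_0:
  assumes g: "g \<in> ell2 X"
    and coeffs: "\<And>y. y \<in> X \<Longrightarrow> g y \<noteq> 0 \<Longrightarrow> T (delta y) x = 0"
  shows "T g x = 0"
proof -
  obtain C where C: "\<And>f. f \<in> ell2 X \<Longrightarrow> ell2_norm (T f) \<le> C * ell2_norm f"
    using bounded_op_bound by blast
  show ?thesis
  proof (rule ell2_functional_eq_0_by_truncation[where \<phi> = "\<lambda>h. T h x" and K = C, OF g])
    fix h k assume "h \<in> ell2 X" "k \<in> ell2 X"
    thus "T (\<lambda>x. h x + k x) x = T h x + T k x" by (simp add: bounded_op_add)
  next
    fix h assume h: "h \<in> ell2 X"
    show "cmod (T h x) \<le> C * ell2_norm h"
      using norm_le_ell2_norm[OF bounded_op_in_ell2[OF h], of x] C[OF h] by linarith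
  next
    fix F assume "finite F" "F \<subseteq> X"
    thus "T (\<lambda>x. if x \<in> F then g x else 0) x = 0"
      using coeffs by (auto simp: bounded_op_truncation intro!: sum.neutral) (meson subsetD)
  qed
qed

end

definition ell2_op :: "'a set \<Rightarrow> 'a op \<Rightarrow> 'a op" where
  "ell2_op X F = (\<lambda>f. if f \<in> ell2 X then F f else (\<lambda>x. 0))"

lemma ell2_op_apply: "f \<in> ell2 X \<Longrightarrow> ell2_op X F f = F f"
  by (simp add: ell2_op_def)

lemma bounded_op_ell2_opI:
  assumes "\<And>f. f \<in> ell2 X \<Longrightarrow> F f \<in> ell2 X"
    and "\<And>f g. f \<in> ell2 X \<Longrightarrow> g \<in> ell2 X \<Longrightarrow> F (\<lambda>x. f x + g x) = (\<lambda>x. F f x + F g x)"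
    and "\<And>c f. f \<in> ell2 X \<Longrightarrow> F (\<lambda>x. c * f x) = (\<lambda>x. c * F f x)"
    and "\<And>f. f \<in> ell2 X \<Longrightarrow> ell2_norm (F f) \<le> C * ell2_norm f"
  shows "bounded_op X (ell2_op X F)"
  by (rule bounded_opI[where C = C]) (auto simp: ell2_op_def assms add_in_ell2 scale_in_ell2)

section \<open>Adjoints\<close>

definition is_adjoint :: "'a set \<Rightarrow> 'a op \<Rightarrow> 'a op \<Rightarrow> bool" where
  "is_adjoint X T S \<longleftrightarrow> bounded_op X S \<and>
      (\<forall>f \<in> ell2 X. \<forall>g \<in> ell2 X. ell2_inner (T f) g = ell2_inner f (S g))"

lemma is_adjoint_unique:
  assumes S1: "is_adjoint X T S1" and S2: "is_adjoint X T S2"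
  shows "S1 = S2"
proof (intro ext)
  fix g y
  have b1: "bounded_op X S1" and b2: "bounded_op X S2" using S1 S2 by (auto simp: is_adjoint_def)
  show "S1 g y = S2 g y"
  proof (cases "g \<in> ell2 X \<and> y \<in> X")
    case True
    hence "S1 g y = ell2_inner (T (delta y)) g"
      using S1 delta_in_ell2[of y X] unfolding is_adjoint_def by (simp add: ell2_inner_delta_left)
    moreover have "S2 g y = ell2_inner (T (delta y)) g"
      using S2 True delta_in_ell2[of y X] unfolding is_adjoint_def
      by (simp add: ell2_inner_delta_left)
    ultimately show ?thesis by simp
  next
    case False
    thus ?thesis
      using bounded_op_outside[OF b1] bounded_op_outside[OF b2]
        ell2_vanishes[OF bounded_op_in_ell2[OF b1]] ell2_vanishes[OF bounded_op_in_ell2[OF b2]]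
      by metis
  qed
qed

lemma adjoint_eqI: "is_adjoint X T S \<Longrightarrow> adjoint X T = S"
  unfolding adjoint_def is_adjoint_def[symmetric] by (blast intro: the_equality is_adjoint_unique)

lemma sq_le_if_le_sqrt_mult:
  fixes s b :: real
  assumes "0 \<le> s" and "s \<le> sqrt s * b"
  shows "s \<le> b\<^sup>2"
proof (cases "s = 0")
  case False
  hence "sqrt s * sqrt s \<le> sqrt s * b" using assms by simp
  moreover have "sqrt s > 0" using False assms(1) by simp
  ultimately have "sqrt s \<le> b" by (rule mult_left_le_imp_le)
  thus ?thesis using assms(1) power_mono[of "sqrt s" b 2] by simp
qed simp

definition adjoint_coeffs :: "'a set \<Rightarrow> 'a op \<Rightarrow> ('a \<Rightarrow> complex) \<Rightarrow> 'a \<Rightarrow> complex" where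
  "adjoint_coeffs X S g = (\<lambda>y. if y \<in> X then ell2_inner (S (delta y)) g else 0)"

context
  fixes X :: "'a set" and S :: "'a op"
  assumes S: "bounded_op X S"
begin

lemma ell2_inner_truncation_adjoint_coeffs:
  assumes F: "finite F" "F \<subseteq> X" and g: "g \<in> ell2 X"
  shows "ell2_inner (S (\<lambda>x. if x \<in> F then f x else 0)) g =
    ell2_inner (\<lambda>x. if x \<in> F then f x else 0) (adjoint_coeffs X S g)"
proof -
  have "ell2_inner (S (\<lambda>x. if x \<in> F then f x else 0)) g =
      (\<Sum>y\<in>F. cnj (f y) * ell2_inner (S (delta y)) g)"
    using F g by (auto simp: bounded_op_truncation[OF S] delta_in_ell2
        intro!: ell2_inner_sum_left bounded_op_in_ell2[OF S])
  also have "\<dots> = (\<Sum>x\<in>F. cnj (if x \<in> F then f x else 0) * adjoint_coeffs X S g x)"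
    using F by (auto simp: adjoint_coeffs_def intro!: sum.cong)
  also have "\<dots> = ell2_inner (\<lambda>x. if x \<in> F then f x else 0) (adjoint_coeffs X S g)"
    using F by (simp add: ell2_inner_finite_support_left)
  finally show ?thesis .
qed

lemma adjoint_coeffs_sum_le:
  assumes C: "\<And>f. f \<in> ell2 X \<Longrightarrow> ell2_norm (S f) \<le> C * ell2_norm f"
    and g: "g \<in> ell2 X" and F: "finite F"
  shows "(\<Sum>y\<in>F. (cmod (adjoint_coeffs X S g y))\<^sup>2) \<le> (C * ell2_norm g)\<^sup>2"
proof -
  define c where "c = adjoint_coeffs X S g"
  define F' where "F' = F \<inter> X"
  define s where "s = (\<Sum>y\<in>F'. (cmod (c y))\<^sup>2)"
  define h where "h = (\<lambda>x. if x \<in> F' then c x else 0)"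
  have s: "0 \<le> s" by (simp add: s_def sum_nonneg)
  have F': "finite F'" "F' \<subseteq> X" using F by (auto simp: F'_def)
  have h: "h \<in> ell2 X" by (rule finite_support_in_ell2[OF F']) (auto simp: h_def)
  have "ell2_inner (S h) g = ell2_inner h c"
    unfolding h_def c_def by (rule ell2_inner_truncation_adjoint_coeffs[OF F' g])
  also have "\<dots> = (\<Sum>y\<in>F'. cnj (c y) * c y)"
    using F' by (simp add: ell2_inner_finite_support_left h_def)
  also have "\<dots> = of_real s"
    unfolding s_def of_real_sum
    by (rule sum.cong) (simp_all add: complex_norm_square mult.commute del: of_real_power)
  finally have "s = cmod (ell2_inner (S h) g)" using s by simp
  also have "\<dots> \<le> ell2_norm (S h) * ell2_norm g"
    by (rule ell2_Cauchy_Schwarz[OF bounded_op_in_ell2[OF S h] g])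
  also have "\<dots> \<le> C * ell2_norm h * ell2_norm g"
    using C[OF h] by (intro mult_right_mono) (auto simp: ell2_norm_nonneg)
  also have "ell2_norm h = sqrt s"
    unfolding ell2_norm_eq_sqrt s_def
    by (subst ell2_sqnorm_finite_support[OF F'(1)]) (auto simp: h_def)
  finally have "s \<le> (C * ell2_norm g)\<^sup>2"
    using s by (intro sq_le_if_le_sqrt_mult) (auto simp: mult_ac)
  moreover have "(\<Sum>y\<in>F. (cmod (c y))\<^sup>2) = s"
    unfolding s_def F'_def
    by (rule sum.mono_neutral_right) (use F in \<open>auto simp: c_def adjoint_coeffs_def\<close>)
  ultimately show ?thesis by (simp add: c_def)
qed

lemma adjoint_coeffs_in_ell2:
  assumes C: "C \<ge> 0" "\<And>f. f \<in> ell2 X \<Longrightarrow> ell2_norm (S f) \<le> C * ell2_norm f"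
    and g: "g \<in> ell2 X"
  shows "adjoint_coeffs X S g \<in> ell2 X"
    and "ell2_norm (adjoint_coeffs X S g) \<le> C * ell2_norm g"
proof -
  have bound: "(\<Sum>y\<in>F. (cmod (adjoint_coeffs X S g y))\<^sup>2) \<le> (C * ell2_norm g)\<^sup>2"
    if "finite F" for F
    using adjoint_coeffs_sum_le[OF C(2) g that] .
  have summable: "(\<lambda>y. (cmod (adjoint_coeffs X S g y))\<^sup>2) summable_on UNIV"
    by (rule nonneg_bdd_above_summable_on) (auto intro!: bdd_aboveI2 bound)
  thus "adjoint_coeffs X S g \<in> ell2 X"
    unfolding mem_ell2_iff by (auto simp: adjoint_coeffs_def)
  have "ell2_sqnorm (adjoint_coeffs X S g) \<le> (C * ell2_norm g)\<^sup>2"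
    unfolding ell2_sqnorm_def by (rule infsum_le_finite_sums[OF summable bound])
  hence "sqrt (ell2_sqnorm (adjoint_coeffs X S g)) \<le> sqrt ((C * ell2_norm g)\<^sup>2)"
    by (rule real_sqrt_le_mono)
  thus "ell2_norm (adjoint_coeffs X S g) \<le> C * ell2_norm g"
    using C(1) ell2_norm_nonneg[of g] by (simp add: ell2_norm_eq_sqrt)
qed

lemma bounded_op_adjoint_coeffs: "bounded_op X (ell2_op X (adjoint_coeffs X S))"
proof -
  obtain C where C: "C \<ge> 0" "\<And>f. f \<in> ell2 X \<Longrightarrow> ell2_norm (S f) \<le> C * ell2_norm f"
    using bounded_op_bound[OF S] by blast
  have S_delta: "y \<in> X \<Longrightarrow> S (delta y) \<in> ell2 X" for y
    by (rule bounded_op_in_ell2[OF S delta_in_ell2])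
  show ?thesis
  proof (rule bounded_op_ell2_opI[where C = C])
    show "adjoint_coeffs X S (\<lambda>x. f x + g x) =
        (\<lambda>x. adjoint_coeffs X S f x + adjoint_coeffs X S g x)"
      if "f \<in> ell2 X" "g \<in> ell2 X" for f g
      using that by (auto simp: adjoint_coeffs_def ell2_inner_add_right[OF _ _ S_delta])
    show "adjoint_coeffs X S (\<lambda>x. c * f x) = (\<lambda>x. c * adjoint_coeffs X S f x)" for c f
      by (auto simp: adjoint_coeffs_def ell2_inner_scale_right)
  qed (use adjoint_coeffs_in_ell2 C in blast)+
qed

lemma ell2_inner_adjoint_coeffs:
  assumes f: "f \<in> ell2 X" and g: "g \<in> ell2 X"
  shows "ell2_inner (S f) g = ell2_inner f (adjoint_coeffs X S g)"
proof -
  obtain C where C: "C \<ge> 0" "\<And>f. f \<in> ell2 X \<Longrightarrow> ell2_norm (S f) \<le> C * ell2_norm f"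
    using bounded_op_bound[OF S] by blast
  let ?c = "adjoint_coeffs X S g"
  have c: "?c \<in> ell2 X" using adjoint_coeffs_in_ell2(1)[of C g] C g by blast
  have "ell2_inner (S f) g - ell2_inner f ?c = 0"
  proof (rule ell2_functional_eq_0_by_truncation[OF f])
    fix h k assume h: "h \<in> ell2 X" and k: "k \<in> ell2 X"
    show "ell2_inner (S (\<lambda>x. h x + k x)) g - ell2_inner (\<lambda>x. h x + k x) ?c =
        ell2_inner (S h) g - ell2_inner h ?c + (ell2_inner (S k) g - ell2_inner k ?c)"
      using bounded_op_add[OF S h k]
        ell2_inner_add_left[OF bounded_op_in_ell2[OF S h] bounded_op_in_ell2[OF S k] g]
        ell2_inner_add_left[OF h k c] by simp
  next
    fix h assume h: "h \<in> ell2 X"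
    have "cmod (ell2_inner (S h) g - ell2_inner h ?c) \<le>
        cmod (ell2_inner (S h) g) + cmod (ell2_inner h ?c)"
      by (rule norm_triangle_ineq4)
    also have "\<dots> \<le> ell2_norm (S h) * ell2_norm g + ell2_norm h * ell2_norm ?c"
      by (intro add_mono ell2_Cauchy_Schwarz[OF bounded_op_in_ell2[OF S h] g]
          ell2_Cauchy_Schwarz[OF h c])
    also have "ell2_norm (S h) * ell2_norm g \<le> C * ell2_norm h * ell2_norm g"
      using C(2)[OF h] by (intro mult_right_mono) (auto simp: ell2_norm_nonneg)
    finally show "cmod (ell2_inner (S h) g - ell2_inner h ?c) \<le>
        (C * ell2_norm g + ell2_norm ?c) * ell2_norm h"
      by (simp add: algebra_simps)
  next
    fix F assume "finite F" "F \<subseteq> X"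
    thus "ell2_inner (S (\<lambda>x. if x \<in> F then f x else 0)) g -
        ell2_inner (\<lambda>x. if x \<in> F then f x else 0) ?c = 0"
      using ell2_inner_truncation_adjoint_coeffs[OF _ _ g] by simp
  qed
  thus ?thesis by simp
qed

lemma is_adjoint_adjoint_coeffs: "is_adjoint X S (ell2_op X (adjoint_coeffs X S))"
  by (simp add: is_adjoint_def bounded_op_adjoint_coeffs ell2_inner_adjoint_coeffs ell2_op_apply)

lemma ell2_inner_adjoint:
  "f \<in> ell2 X \<Longrightarrow> g \<in> ell2 X \<Longrightarrow> ell2_inner (S f) g = ell2_inner f (adjoint X S g)"
  using is_adjoint_adjoint_coeffs adjoint_eqI[OF is_adjoint_adjoint_coeffs]
  by (simp add: is_adjoint_def)

end

section \<open>The operator algebra and its norm closures\<close>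

lemma bounded_op_plus:
  assumes S: "bounded_op X S" and T: "bounded_op X T"
  shows "bounded_op X (\<lambda>f x. S f x + T f x)"
proof -
  obtain C1 where C1: "\<And>f. f \<in> ell2 X \<Longrightarrow> ell2_norm (S f) \<le> C1 * ell2_norm f"
    using bounded_op_bound[OF S] by blast
  obtain C2 where C2: "\<And>f. f \<in> ell2 X \<Longrightarrow> ell2_norm (T f) \<le> C2 * ell2_norm f"
    using bounded_op_bound[OF T] by blast
  show ?thesis
  proof (rule bounded_opI[where C = "C1 + C2"])
    fix f assume f: "f \<in> ell2 X"
    have "ell2_norm (\<lambda>x. S f x + T f x) \<le> ell2_norm (S f) + ell2_norm (T f)"
      by (rule ell2_norm_triangle[OF bounded_op_in_ell2[OF S f] bounded_op_in_ell2[OF T f]])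
    also have "\<dots> \<le> C1 * ell2_norm f + C2 * ell2_norm f" by (rule add_mono[OF C1[OF f] C2[OF f]])
    finally show "ell2_norm (\<lambda>x. S f x + T f x) \<le> (C1 + C2) * ell2_norm f"
      by (simp add: algebra_simps)
  qed (simp_all add: bounded_op_outside[OF S] bounded_op_outside[OF T] bounded_op_add[OF S]
      bounded_op_add[OF T] bounded_op_scale[OF S] bounded_op_scale[OF T] add_in_ell2
      bounded_op_in_ell2[OF S] bounded_op_in_ell2[OF T] algebra_simps)
qed

lemma bounded_op_cmult:
  assumes S: "bounded_op X S"
  shows "bounded_op X (\<lambda>f x. c * S f x)"
proof -
  obtain C where C: "C \<ge> 0" "\<And>f. f \<in> ell2 X \<Longrightarrow> ell2_norm (S f) \<le> C * ell2_norm f"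
    using bounded_op_bound[OF S] by blast
  show ?thesis
  proof (rule bounded_opI[where C = "cmod c * C"])
    fix f assume f: "f \<in> ell2 X"
    show "ell2_norm (\<lambda>x. c * S f x) \<le> cmod c * C * ell2_norm f"
      using mult_left_mono[OF C(2)[OF f], of "cmod c"] by (simp add: ell2_norm_scale mult_ac)
  qed (simp_all add: bounded_op_outside[OF S] bounded_op_add[OF S] bounded_op_scale[OF S]
      scale_in_ell2 bounded_op_in_ell2[OF S] algebra_simps)
qed

lemma bounded_op_comp:
  assumes S: "bounded_op X S" and T: "bounded_op X T"
  shows "bounded_op X (S \<circ> T)"
proof -
  obtain C1 where C1: "C1 \<ge> 0" "\<And>f. f \<in> ell2 X \<Longrightarrow> ell2_norm (S f) \<le> C1 * ell2_norm f"
    using bounded_op_bound[OF S] by blast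
  obtain C2 where C2: "\<And>f. f \<in> ell2 X \<Longrightarrow> ell2_norm (T f) \<le> C2 * ell2_norm f"
    using bounded_op_bound[OF T] by blast
  show ?thesis
  proof (rule bounded_opI[where C = "C1 * C2"])
    fix f assume f: "f \<in> ell2 X"
    have "ell2_norm (S (T f)) \<le> C1 * ell2_norm (T f)" by (rule C1(2)[OF bounded_op_in_ell2[OF T f]])
    also have "\<dots> \<le> C1 * (C2 * ell2_norm f)" by (rule mult_left_mono[OF C2[OF f] C1(1)])
    finally show "ell2_norm ((S \<circ> T) f) \<le> C1 * C2 * ell2_norm f" by (simp add: mult_ac)
  qed (simp_all add: bounded_op_outside[OF T] bounded_op_zero[OF S] bounded_op_add[OF S]
      bounded_op_add[OF T] bounded_op_scale[OF S] bounded_op_scale[OF T]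
      bounded_op_in_ell2[OF S] bounded_op_in_ell2[OF T])
qed

lemma op_close_mono: "op_close X T S e1 \<Longrightarrow> e1 \<le> e2 \<Longrightarrow> op_close X T S e2"
  unfolding op_close_def by (meson mult_right_mono ell2_norm_nonneg order_trans)

lemma op_close_plus:
  assumes S: "bounded_op X S" and T: "bounded_op X T"
    and S': "bounded_op X S'" and T': "bounded_op X T'"
    and close: "op_close X S S' e1" "op_close X T T' e2"
  shows "op_close X (\<lambda>f x. S f x + T f x) (\<lambda>f x. S' f x + T' f x) (e1 + e2)"
  unfolding op_close_def
proof
  fix f assume f: "f \<in> ell2 X"
  have "ell2_norm (\<lambda>x. (S f x + T f x) - (S' f x + T' f x)) =
      ell2_norm (\<lambda>x. (S f x - S' f x) + (T f x - T' f x))"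
    by (simp add: algebra_simps)
  also have "\<dots> \<le> ell2_norm (\<lambda>x. S f x - S' f x) + ell2_norm (\<lambda>x. T f x - T' f x)"
    using f by (intro ell2_norm_triangle[where X = X] diff_in_ell2 bounded_op_in_ell2[OF S]
        bounded_op_in_ell2[OF T] bounded_op_in_ell2[OF S'] bounded_op_in_ell2[OF T'])
  also have "\<dots> \<le> e1 * ell2_norm f + e2 * ell2_norm f"
    using close f unfolding op_close_def by (intro add_mono) auto
  finally show "ell2_norm (\<lambda>x. (S f x + T f x) - (S' f x + T' f x)) \<le> (e1 + e2) * ell2_norm f"
    by (simp add: algebra_simps)
qed

lemma op_close_cmult:
  "op_close X S S' e \<Longrightarrow> op_close X (\<lambda>f x. c * S f x) (\<lambda>f x. c * S' f x) (cmod c * e)"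
  unfolding op_close_def
  by (auto simp: ell2_norm_scale right_diff_distrib[symmetric] mult.assoc intro!: mult_left_mono)

lemma op_close_comp:
  assumes S: "bounded_op X S" and T: "bounded_op X T"
    and S': "bounded_op X S'" and T': "bounded_op X T'"
    and CT: "\<And>f. f \<in> ell2 X \<Longrightarrow> ell2_norm (T f) \<le> CT * ell2_norm f"
    and C': "C' \<ge> 0" "\<And>f. f \<in> ell2 X \<Longrightarrow> ell2_norm (S' f) \<le> C' * ell2_norm f"
    and "e1 \<ge> 0" and close: "op_close X S S' e1" "op_close X T T' e2"
  shows "op_close X (S \<circ> T) (S' \<circ> T') (e1 * CT + C' * e2)"
  unfolding op_close_def
proof
  fix f assume f: "f \<in> ell2 X"
  have Tf: "T f \<in> ell2 X" and T'f: "T' f \<in> ell2 X"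
    using bounded_op_in_ell2[OF T f] bounded_op_in_ell2[OF T' f] .
  have "ell2_norm (\<lambda>x. S (T f) x - S' (T' f) x) \<le>
      ell2_norm (\<lambda>x. S (T f) x - S' (T f) x) + ell2_norm (\<lambda>x. S' (T f) x - S' (T' f) x)"
    using Tf T'f by (intro ell2_norm_triangle_diff[where X = X] bounded_op_in_ell2[OF S]
        bounded_op_in_ell2[OF S'])
  also have "ell2_norm (\<lambda>x. S (T f) x - S' (T f) x) \<le> e1 * ell2_norm (T f)"
    using close(1) Tf unfolding op_close_def by blast
  also have "\<dots> \<le> e1 * (CT * ell2_norm f)" using CT[OF f] \<open>e1 \<ge> 0\<close> by (rule mult_left_mono)
  also have "ell2_norm (\<lambda>x. S' (T f) x - S' (T' f) x) = ell2_norm (S' (\<lambda>x. T f x - T' f x))"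
    by (simp add: bounded_op_diff[OF S' Tf T'f])
  also have "\<dots> \<le> C' * ell2_norm (\<lambda>x. T f x - T' f x)" by (rule C'(2)[OF diff_in_ell2[OF Tf T'f]])
  also have "\<dots> \<le> C' * (e2 * ell2_norm f)"
    using close(2) f C'(1) unfolding op_close_def by (intro mult_left_mono) auto
  finally show "ell2_norm (\<lambda>x. (S \<circ> T) f x - (S' \<circ> T') f x) \<le> (e1 * CT + C' * e2) * ell2_norm f"
    by (simp add: algebra_simps)
qed

lemma op_closure_mono: "G \<subseteq> H \<Longrightarrow> op_closure X G \<subseteq> op_closure X H"
  unfolding op_closure_def by blast

lemma op_closure_superset: "T \<in> G \<Longrightarrow> bounded_op X T \<Longrightarrow> T \<in> op_closure X G"
  unfolding op_closure_def op_close_def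
  by (auto simp: ell2_norm_zero ell2_norm_nonneg intro!: bexI[of _ T])

lemma op_closure_bounded: "T \<in> op_closure X G \<Longrightarrow> bounded_op X T"
  unfolding op_closure_def by blast

lemma op_closure_approx:
  "T \<in> op_closure X G \<Longrightarrow> e > 0 \<Longrightarrow> \<exists>S\<in>G. op_close X T S e"
  unfolding op_closure_def by blast

lemma op_closure_plus:
  assumes S: "S \<in> op_closure X G" and T: "T \<in> op_closure X G"
    and G: "\<And>S. S \<in> G \<Longrightarrow> bounded_op X S"
    and closed: "\<And>S T. S \<in> G \<Longrightarrow> T \<in> G \<Longrightarrow> (\<lambda>f x. S f x + T f x) \<in> G"
  shows "(\<lambda>f x. S f x + T f x) \<in> op_closure X G"
  unfolding op_closure_def
proof (intro CollectI conjI allI impI)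
  show "bounded_op X (\<lambda>f x. S f x + T f x)"
    by (rule bounded_op_plus[OF op_closure_bounded[OF S] op_closure_bounded[OF T]])
  fix e :: real assume "e > 0"
  then obtain S' T' where S': "S' \<in> G" "op_close X S S' (e/2)"
    and T': "T' \<in> G" "op_close X T T' (e/2)"
    using op_closure_approx[OF S, of "e/2"] op_closure_approx[OF T, of "e/2"] by auto
  have "op_close X (\<lambda>f x. S f x + T f x) (\<lambda>f x. S' f x + T' f x) (e/2 + e/2)"
    by (rule op_close_plus[OF op_closure_bounded[OF S] op_closure_bounded[OF T]
          G[OF S'(1)] G[OF T'(1)] S'(2) T'(2)])
  thus "\<exists>R\<in>G. op_close X (\<lambda>f x. S f x + T f x) R e" using closed[OF S'(1) T'(1)] by auto
qed

lemma op_closure_cmult: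
  assumes S: "S \<in> op_closure X G"
    and closed: "\<And>S. S \<in> G \<Longrightarrow> (\<lambda>f x. c * S f x) \<in> G"
  shows "(\<lambda>f x. c * S f x) \<in> op_closure X G"
  unfolding op_closure_def
proof (intro CollectI conjI allI impI)
  show "bounded_op X (\<lambda>f x. c * S f x)" by (rule bounded_op_cmult[OF op_closure_bounded[OF S]])
  fix e :: real assume e: "e > 0"
  hence "e / (cmod c + 1) > 0" by (simp add: add_nonneg_pos)
  then obtain S' where S': "S' \<in> G" "op_close X S S' (e / (cmod c + 1))"
    using op_closure_approx[OF S] by blast
  have "cmod c * (e / (cmod c + 1)) = e * (cmod c / (cmod c + 1))" by simp
  also have "\<dots> \<le> e" using e by (intro mult_left_le) (auto simp: divide_le_eq_1 add_nonneg_pos)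
  finally have "cmod c * (e / (cmod c + 1)) \<le> e" .
  with op_close_cmult[OF S'(2)] have "op_close X (\<lambda>f x. c * S f x) (\<lambda>f x. c * S' f x) e"
    by (rule op_close_mono)
  thus "\<exists>R\<in>G. op_close X (\<lambda>f x. c * S f x) R e" using closed[OF S'(1)] by auto
qed

lemma op_closure_comp:
  assumes S: "S \<in> op_closure X G" and T: "T \<in> op_closure X H"
    and G: "\<And>S. S \<in> G \<Longrightarrow> bounded_op X S" and H: "\<And>T. T \<in> H \<Longrightarrow> bounded_op X T"
    and closed: "\<And>S T. S \<in> G \<Longrightarrow> T \<in> H \<Longrightarrow> S \<circ> T \<in> G"
  shows "S \<circ> T \<in> op_closure X G"
  unfolding op_closure_def
proof (intro CollectI conjI allI impI)
  have bS: "bounded_op X S" and bT: "bounded_op X T"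
    using op_closure_bounded[OF S] op_closure_bounded[OF T] .
  show "bounded_op X (S \<circ> T)" by (rule bounded_op_comp[OF bS bT])
  fix e :: real assume e: "e > 0"
  obtain CT where CT: "CT \<ge> 0" "\<And>f. f \<in> ell2 X \<Longrightarrow> ell2_norm (T f) \<le> CT * ell2_norm f"
    using bounded_op_bound[OF bT] by blast
  define e1 where "e1 = e / (2 * (CT + 1))"
  have e1: "e1 > 0" using e CT by (simp add: e1_def add_nonneg_pos)
  obtain S' where S': "S' \<in> G" "op_close X S S' e1"
    using op_closure_approx[OF S e1] by blast
  obtain C' where C': "C' \<ge> 0" "\<And>f. f \<in> ell2 X \<Longrightarrow> ell2_norm (S' f) \<le> C' * ell2_norm f"
    using bounded_op_bound[OF G[OF S'(1)]] by blast
  define e2 where "e2 = e / (2 * (C' + 1))"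
  have e2: "e2 > 0" using e C' by (simp add: e2_def add_nonneg_pos)
  obtain T' where T': "T' \<in> H" "op_close X T T' e2"
    using op_closure_approx[OF T e2] by blast
  have "op_close X (S \<circ> T) (S' \<circ> T') (e1 * CT + C' * e2)"
    by (rule op_close_comp[OF bS bT G[OF S'(1)] H[OF T'(1)] CT(2) C' less_imp_le[OF e1]
          S'(2) T'(2)])
  moreover have "e1 * CT \<le> e / 2" "C' * e2 \<le> e / 2"
    using e CT C' by (simp_all add: e1_def e2_def field_simps)
  ultimately have "op_close X (S \<circ> T) (S' \<circ> T') e" by (auto elim: op_close_mono)
  thus "\<exists>R\<in>G. op_close X (S \<circ> T) R e" using closed[OF S'(1) T'(1)] by auto
qed

section \<open>The cross distance and finite propagation\<close>

context Metric_space
begin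

lemma dA_le: "z \<in> A \<Longrightarrow> dA d A x y \<le> d x z + d y z + 1"
  unfolding dA_def by (rule cInf_lower) (auto intro: bdd_belowI2[where m = 0])

lemma dist_plus_one_le_dA:
  assumes "A \<subseteq> M" "A \<noteq> {}" "x \<in> M" "y \<in> M"
  shows "d y x + 1 \<le> dA d A y x"
  unfolding dA_def
proof (rule cInf_greatest)
  fix t assume "t \<in> (\<lambda>z. d y z + d x z + 1) ` A"
  then obtain z where z: "z \<in> A" "t = d y z + d x z + 1" by blast
  have "d y x \<le> d y z + d z x" using triangle z assms by auto
  thus "d y x + 1 \<le> t" using z commute[of z x] by simp
qed (use assms in simp)

lemma dA_triangle:
  assumes "A \<subseteq> M" "A \<noteq> {}" "y \<in> M" "w \<in> M"
  shows "dA d A y x \<le> d y w + dA d A w x"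
proof -
  have "dA d A y x - d y w \<le> dA d A w x"
    unfolding dA_def[of d A w x]
  proof (rule cInf_greatest)
    fix t assume "t \<in> (\<lambda>z. d w z + d x z + 1) ` A"
    then obtain z where z: "z \<in> A" "t = d w z + d x z + 1" by blast
    have "dA d A y x \<le> d y z + d x z + 1" by (rule dA_le[OF z(1)])
    also have "d y z \<le> d y w + d w z" using triangle z assms by auto
    finally show "dA d A y x - d y w \<le> t" using z by simp
  qed (use assms in simp)
  thus ?thesis by simp
qed

lemma setdist_le_dA_diag:
  assumes "A \<noteq> {}"
  shows "setdist d y A \<le> dA d A y y"
  unfolding dA_def
proof (rule cInf_greatest)
  fix t assume "t \<in> (\<lambda>z. d y z + d y z + 1) ` A"
  then obtain z where z: "z \<in> A" "t = d y z + d y z + 1" by blast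
  have "setdist d y A \<le> d y z"
    unfolding setdist_def by (rule cInf_lower) (use z in \<open>auto intro: bdd_belowI2[where m = 0]\<close>)
  thus "setdist d y A \<le> t" using z(2) nonneg[of y z] by linarith
qed (use assms in simp)

end

lemma finite_prop_plus:
  assumes "finite_prop X D S" "finite_prop X D T"
  shows "finite_prop X D (\<lambda>f x. S f x + T f x)"
proof -
  obtain L1 L2 where "\<forall>x\<in>X. \<forall>y\<in>X. L1 \<le> D y x \<longrightarrow> S (delta y) x = 0"
    and "\<forall>x\<in>X. \<forall>y\<in>X. L2 \<le> D y x \<longrightarrow> T (delta y) x = 0"
    using assms unfolding finite_prop_def by blast
  thus ?thesis unfolding finite_prop_def by (intro exI[of _ "max L1 L2"]) auto
qed

lemma finite_prop_cmult: "finite_prop X D S \<Longrightarrow> finite_prop X D (\<lambda>f x. c * S f x)"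
  unfolding finite_prop_def by auto

lemma finite_prop_anti_mono:
  assumes "\<And>x y. x \<in> X \<Longrightarrow> y \<in> X \<Longrightarrow> D' y x \<le> D y x" and "finite_prop X D T"
  shows "finite_prop X D' T"
  using assms unfolding finite_prop_def by (meson order_trans)

lemma finite_prop_finite_support:
  assumes "finite {(y, x). y \<in> X \<and> x \<in> X \<and> T (delta y) x \<noteq> 0}" (is "finite ?P")
  shows "finite_prop X D T"
  unfolding finite_prop_def
proof (intro exI ballI impI)
  let ?L = "Max (insert 0 ((\<lambda>(y, x). D y x) ` ?P)) + 1"
  fix x y assume "x \<in> X" "y \<in> X" "?L \<le> D y x"
  moreover have "(y, x) \<in> ?P \<Longrightarrow> D y x \<le> Max (insert 0 ((\<lambda>(y, x). D y x) ` ?P))"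
    using assms by (intro Max_ge) auto
  ultimately show "T (delta y) x = 0" by force
qed

lemma (in Metric_space) finite_prop_dA_comp:
  assumes A: "A \<subseteq> M" "A \<noteq> {}" and S: "bounded_op M S" and T: "bounded_op M T"
    and "finite_prop M (dA d A) S" and "finite_prop M d T"
  shows "finite_prop M (dA d A) (S \<circ> T)"
proof -
  obtain L1 where L1: "\<And>x y. x \<in> M \<Longrightarrow> y \<in> M \<Longrightarrow> L1 \<le> dA d A y x \<Longrightarrow> S (delta y) x = 0"
    using \<open>finite_prop M (dA d A) S\<close> unfolding finite_prop_def by blast
  obtain L2 where L2: "\<And>x y. x \<in> M \<Longrightarrow> y \<in> M \<Longrightarrow> L2 \<le> d y x \<Longrightarrow> T (delta y) x = 0"
    using \<open>finite_prop M d T\<close> unfolding finite_prop_def by blast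
  show ?thesis unfolding finite_prop_def
  proof (intro exI[of _ "L1 + L2"] ballI impI)
    fix x y assume x: "x \<in> M" and y: "y \<in> M" and far: "L1 + L2 \<le> dA d A y x"
    show "(S \<circ> T) (delta y) x = 0" unfolding comp_def
    proof (rule bounded_op_apply_eq_0[OF S bounded_op_in_ell2[OF T delta_in_ell2[OF y]]])
      fix w assume w: "w \<in> M" and "T (delta y) w \<noteq> 0"
      hence "d y w < L2" using L2[OF w y] by force
      moreover have "dA d A y x \<le> d y w + dA d A w x" by (rule dA_triangle[OF A y w])
      ultimately show "S (delta w) x = 0" using far by (intro L1[OF x w]) linarith
    qed
  qed
qed

section \<open>The submodule M and its orthogonal complement\<close>

lemma M_space_subset_uniform_roe:
  assumes ms: "Metric_space X d" and A: "A \<subseteq> X" "A \<noteq> {}"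
  shows "M_space X d A \<subseteq> uniform_roe X d"
  unfolding M_space_def uniform_roe_def
proof (rule op_closure_mono, safe)
  fix T assume "finite_prop X (dA d A) T"
  moreover have "d y x \<le> dA d A y x" if "x \<in> X" "y \<in> X" for x y
    using Metric_space.dist_plus_one_le_dA[OF ms A that] by simp
  ultimately show "finite_prop X d T" by (rule finite_prop_anti_mono[rotated])
qed

lemma M_space_plus:
  "S \<in> M_space X d A \<Longrightarrow> T \<in> M_space X d A \<Longrightarrow> (\<lambda>f x. S f x + T f x) \<in> M_space X d A"
  unfolding M_space_def by (rule op_closure_plus) (auto intro: bounded_op_plus finite_prop_plus)

lemma M_space_cmult: "S \<in> M_space X d A \<Longrightarrow> (\<lambda>f x. c * S f x) \<in> M_space X d A"
  unfolding M_space_def by (rule op_closure_cmult) (auto intro: bounded_op_cmult finite_prop_cmult)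

lemma M_space_comp_uniform_roe:
  assumes ms: "Metric_space X d" and A: "A \<subseteq> X" "A \<noteq> {}"
  shows "S \<in> M_space X d A \<Longrightarrow> T \<in> uniform_roe X d \<Longrightarrow> S \<circ> T \<in> M_space X d A"
  unfolding M_space_def uniform_roe_def
  by (rule op_closure_comp)
    (auto intro: bounded_op_comp Metric_space.finite_prop_dA_comp[OF ms A])

lemma bounded_op_ell2_id: "bounded_op X (ell2_op X (\<lambda>f. f))"
  by (rule bounded_op_ell2_opI[where C = 1]) auto

lemma ell2_id_in_uniform_roe:
  assumes ms: "Metric_space X d"
  shows "ell2_op X (\<lambda>f. f) \<in> uniform_roe X d"
  unfolding uniform_roe_def
proof (intro op_closure_superset CollectI conjI bounded_op_ell2_id)
  show "finite_prop X d (ell2_op X (\<lambda>f. f))"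
    unfolding finite_prop_def
  proof (intro exI[of _ 1] ballI impI)
    fix x y assume "x \<in> X" "y \<in> X" "1 \<le> d y x"
    hence "x \<noteq> y" using Metric_space.zero[OF ms, of y y] by auto
    thus "ell2_op X (\<lambda>f. f) (delta y) x = 0"
      using delta_in_ell2[OF \<open>y \<in> X\<close>] by (simp add: ell2_op_apply delta_def)
  qed
qed

lemma ell2_id_notin_M_space:
  assumes ms: "Metric_space X d" and "A \<noteq> {}"
    and far: "\<forall>k::nat. X - nbhd X d (real k) A \<noteq> {}"
  shows "ell2_op X (\<lambda>f. f) \<notin> M_space X d A"
proof
  assume "ell2_op X (\<lambda>f. f) \<in> M_space X d A"
  then obtain S where S: "bounded_op X S" "finite_prop X (dA d A) S"
    and close: "op_close X (ell2_op X (\<lambda>f. f)) S (1/2)"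
    unfolding M_space_def using op_closure_approx[of _ X _ "1/2"] by auto
  obtain L where L: "\<And>x y. x \<in> X \<Longrightarrow> y \<in> X \<Longrightarrow> L \<le> dA d A y x \<Longrightarrow> S (delta y) x = 0"
    using S(2) unfolding finite_prop_def by blast
  obtain k :: nat where "L \<le> real k" using real_arch_simple by blast
  moreover obtain y where y: "y \<in> X" "y \<notin> nbhd X d (real k) A" using far by blast
  moreover have "setdist d y A \<le> dA d A y y"
    by (rule Metric_space.setdist_le_dA_diag[OF ms \<open>A \<noteq> {}\<close>])
  ultimately have "S (delta y) y = 0" using L[OF y(1) y(1)] by (simp add: nbhd_def)
  have delta: "delta y \<in> ell2 X" by (rule delta_in_ell2[OF y(1)])
  have "1 = cmod (delta y y - S (delta y) y)"
    using \<open>S (delta y) y = 0\<close> by (simp add: delta_def)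
  also have "\<dots> \<le> ell2_norm (\<lambda>x. delta y x - S (delta y) x)"
    by (rule norm_le_ell2_norm[OF diff_in_ell2[OF delta bounded_op_in_ell2[OF S(1) delta]]])
  also have "\<dots> \<le> 1/2"
    using close delta unfolding op_close_def by (auto simp: ell2_op_apply ell2_norm_delta)
  finally show False by simp
qed

lemma delta_projection_in_M_space:
  assumes y: "y \<in> X"
  shows "ell2_op X (\<lambda>f x. f y * delta y x) \<in> M_space X d A"
proof -
  have "bounded_op X (ell2_op X (\<lambda>f x. f y * delta y x))"
  proof (rule bounded_op_ell2_opI[where C = 1])
    show "ell2_norm (\<lambda>x. f y * delta y x) \<le> 1 * ell2_norm f" if "f \<in> ell2 X" for f
      using norm_le_ell2_norm[OF that] by (simp add: ell2_norm_scale ell2_norm_delta)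
  qed (auto simp: scale_in_ell2 delta_in_ell2[OF y] algebra_simps)
  moreover have "ell2_op X (\<lambda>f x. f y * delta y x) (delta y') = (\<lambda>x. delta y' y * delta y x)"
    if "y' \<in> X" for y'
    by (rule ell2_op_apply[OF delta_in_ell2[OF that]])
  hence "{(y', x). y' \<in> X \<and> x \<in> X \<and> ell2_op X (\<lambda>f x. f y * delta y x) (delta y') x \<noteq> 0}
      \<subseteq> {(y, y)}"
    by (auto simp: delta_def split: if_splits)
  hence "finite_prop X (dA d A) (ell2_op X (\<lambda>f x. f y * delta y x))"
    by (intro finite_prop_finite_support) (rule finite_subset, auto)
  ultimately show ?thesis unfolding M_space_def by (intro op_closure_superset) auto
qed

lemma adjoint_annihilates_M_space_imp_zero:
  assumes S: "bounded_op X S" and annihil: "\<forall>T\<in>M_space X d A. adjoint X S \<circ> T = zero_op"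
  shows "S = zero_op"
proof (intro ext)
  fix f x
  have adjoint_delta: "adjoint X S (delta y) = (\<lambda>x. 0)" if y: "y \<in> X" for y
  proof -
    let ?E = "ell2_op X (\<lambda>f x. f y * delta y x)"
    have "?E (delta y) = delta y" using delta_in_ell2[OF y] by (simp add: ell2_op_apply delta_def)
    moreover have "(adjoint X S \<circ> ?E) (delta y) = zero_op (delta y)"
      using annihil delta_projection_in_M_space[OF y] by simp
    ultimately show ?thesis by (simp add: zero_op_def)
  qed
  show "S f x = zero_op f x"
  proof (cases "f \<in> ell2 X \<and> x \<in> X")
    case True
    hence "cnj (S f x) = ell2_inner (S f) (delta x)" by (simp add: ell2_inner_delta_right)
    also have "\<dots> = ell2_inner f (adjoint X S (delta x))"
      using True by (intro ell2_inner_adjoint[OF S] delta_in_ell2) auto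
    also have "\<dots> = 0" using True adjoint_delta by (simp add: ell2_inner_zero_right)
    finally show ?thesis by (simp add: zero_op_def)
  next
    case False
    thus ?thesis using bounded_op_outside[OF S] ell2_vanishes[OF bounded_op_in_ell2[OF S]]
      by (cases "f \<in> ell2 X") (auto simp: zero_op_def)
  qed
qed

lemma bounded_op_zero_op: "bounded_op X zero_op"
  unfolding bounded_op_def zero_op_def
  by (auto simp: zero_in_ell2 ell2_norm_zero ell2_norm_nonneg intro!: exI[of _ 0])

lemma zero_op_in_uniform_roe: "zero_op \<in> uniform_roe X d"
  unfolding uniform_roe_def
  by (intro op_closure_superset CollectI conjI bounded_op_zero_op)
    (auto simp: finite_prop_def zero_op_def)

lemma adjoint_zero_op: "adjoint X zero_op = zero_op"
  by (rule adjoint_eqI)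
    (use bounded_op_zero_op in \<open>simp add: is_adjoint_def zero_op_def ell2_inner_def\<close>)

lemma zero_op_comp: "zero_op \<circ> T = zero_op"
  by (simp add: zero_op_def comp_def)

theorem mainTheorem7:
  fixes X :: "'a set" and d :: "'a \<Rightarrow> 'a \<Rightarrow> real" and A :: "'a set"
  assumes "Metric_space X d"
    and "discrete_metric X d"
    and "countable X"
    and "A \<subseteq> X" and "A \<noteq> {}"
    and "\<forall>k::nat. X - nbhd X d (real k) A \<noteq> {}"
  shows "M_space X d A \<subseteq> uniform_roe X d
    \<and> (\<forall>S\<in>M_space X d A. \<forall>T\<in>M_space X d A. (\<lambda>f x. S f x + T f x) \<in> M_space X d A)
    \<and> (\<forall>c. \<forall>S\<in>M_space X d A. (\<lambda>f x. c * S f x) \<in> M_space X d A)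
    \<and> (\<forall>S\<in>M_space X d A. \<forall>T\<in>uniform_roe X d. S \<circ> T \<in> M_space X d A)
    \<and> M_space X d A \<noteq> uniform_roe X d
    \<and> {S \<in> uniform_roe X d. \<forall>T\<in>M_space X d A. adjoint X S \<circ> T = zero_op} = {zero_op}"
proof -
  note ms = assms(1) and A = assms(4,5)
  have "M_space X d A \<noteq> uniform_roe X d"
    using ell2_id_in_uniform_roe[OF ms] ell2_id_notin_M_space[OF ms A(2) assms(6)] by blast
  moreover have "S = zero_op"
    if "S \<in> uniform_roe X d" "\<forall>T\<in>M_space X d A. adjoint X S \<circ> T = zero_op" for S
    using that unfolding uniform_roe_def
    by (blast intro: adjoint_annihilates_M_space_imp_zero op_closure_bounded)
  hence "{S \<in> uniform_roe X d. \<forall>T\<in>M_space X d A. adjoint X S \<circ> T = zero_op} = {zero_op}"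
    by (auto simp: zero_op_in_uniform_roe adjoint_zero_op zero_op_comp)
  ultimately show ?thesis
    using M_space_subset_uniform_roe[OF ms A] M_space_plus M_space_cmult
      M_space_comp_uniform_roe[OF ms A]
    by blast
qed

end
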